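(* Let $G$ be a finite simple graph on the vertex set $[d]=\{1,\dots,d\}$, let $k\ge 1$, and let $f,g$ be $k$-colorings of $G$. Then $f\sim_k g$ if and only if ${\bf x}_f-{\bf x}_g\in J_G$.
   Context: A $k$-coloring of a graph $H$ is a map $f:V(H)\to[k]$ (not necessarily surjective) with $f(u)\neq f(v)$ for every edge $\{u,v\}$ of $H$. Given a $k$-coloring $f$ of $H$ and colors $1\le i<j\le k$, let $C$ be a connected component of the induced subgraph $H[f^{-1}(i)\cup f^{-1}(j)]$; the coloring that agrees with $f$ outside $C$ and interchanges the colors $i$ and $j$ on $C$ is said to be obtained from $f$ by a Kempe switching. Two $k$-colorings $f,g$ of $H$ are Kempe equivalent, written $f\sim_k g$, if there is a finite sequence $f=f_0,f_1,\dots,f_s=g$ of $k$-colorings of $H$ with each $f_i$ obtained from $f_{i-1}$ by a Kempe switching. A stable set of $G$ is a subset $S\subseteq[d]$ containing no edge of $G$ (so $\emptyset$ and all singletons are stable); $S(G)$ denotes the set of stable sets. Let $\mathbb{K}$ be a field and $R[G]=\mathbb{K}[x_S : S\in S(G)]$ the polynomial ring with one variable of degree $1$ for each stable set. For a $k$-coloring $f$ of an induced subgraph $G[W]$ ($W\subseteq[d]$) put ${\bf x}_f=\prod_{\ell=1}^k x_{f^{-1}(\ell)}$ (each $f^{-1}(\ell)$ is a stable set, possibly empty). The $2$-coloring ideal $J_G\subseteq R[G]$ is the ideal generated by all ${\bf x}_f-{\bf x}_g$ where $f,g$ are $2$-colorings of the same induced subgraph $G[W]$ of $G$ (equivalently,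 by all $x_{S_1}x_{S_2}-x_{S_3}x_{S_4}$ with $S_i\in S(G)$, $S_1\cap S_2=S_3\cap S_4=\emptyset$ and $S_1\cup S_2=S_3\cup S_4$). *)

theory Defs
  imports Main "HOL-Library.Poly_Mapping" "HOL-Library.FuncSet"
begin

definition simple_graph :: "nat \<Rightarrow> nat set set \<Rightarrow> bool" where
  "simple_graph d E \<longleftrightarrow> (\<forall>e\<in>E. \<exists>u v. e = {u, v} \<and> u \<noteq> v \<and> u \<in> {1..d} \<and> v \<in> {1..d})"

definition coloring :: "nat set set \<Rightarrow> nat set \<Rightarrow> nat \<Rightarrow> (nat \<Rightarrow> nat) \<Rightarrow> bool" where
  "coloring E W k f \<longleftrightarrow> f \<in> W \<rightarrow>\<^sub>E {1..k} \<and>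
     (\<forall>u\<in>W. \<forall>v\<in>W. {u, v} \<in> E \<longrightarrow> f u \<noteq> f v)"

definition component :: "nat set set \<Rightarrow> nat set \<Rightarrow> nat \<Rightarrow> nat set" where
  "component E U v = {u. (v, u) \<in> {(a, b). a \<in> U \<and> b \<in> U \<and> {a, b} \<in> E}\<^sup>*}"

definition is_component :: "nat set set \<Rightarrow> nat set \<Rightarrow> nat set \<Rightarrow> bool" where
  "is_component E U C \<longleftrightarrow> (\<exists>v\<in>U. C = component E U v)"

definition kempe_switch :: "nat \<Rightarrow> nat set set \<Rightarrow> nat \<Rightarrow> (nat \<Rightarrow> nat) \<Rightarrow> (nat \<Rightarrow> nat) \<Rightarrow> bool" where
  "kempe_switch d E k f g \<longleftrightarrow> coloring E {1..d} k f \<and> coloring E {1..d} k g \<and>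
     (\<exists>i j C. 1 \<le> i \<and> i < j \<and> j \<le> k \<and>
        is_component E {v\<in>{1..d}. f v = i \<or> f v = j} C \<and>
        g = (\<lambda>v. if v \<in> C then (if f v = i then j else i) else f v))"

definition kempe_equiv :: "nat \<Rightarrow> nat set set \<Rightarrow> nat \<Rightarrow> (nat \<Rightarrow> nat) \<Rightarrow> (nat \<Rightarrow> nat) \<Rightarrow> bool" where
  "kempe_equiv d E k f g \<longleftrightarrow> (kempe_switch d E k)\<^sup>*\<^sup>* f g"

definition stable :: "nat \<Rightarrow> nat set set \<Rightarrow> nat set \<Rightarrow> bool" where
  "stable d E S \<longleftrightarrow> S \<subseteq> {1..d} \<and> (\<forall>e\<in>E. \<not> e \<subseteq> S)"

text \<open>Polynomials over the field 'a in variables indexed by sets of vertices;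
  the ring R[G] consists of those polynomials only involving variables x_S, S stable.\<close>
type_synonym 'a spoly = "(nat set \<Rightarrow>\<^sub>0 nat) \<Rightarrow>\<^sub>0 'a"

definition var :: "nat set \<Rightarrow> 'a::comm_ring_1 spoly" where
  "var S = Poly_Mapping.single (Poly_Mapping.single S 1) 1"

definition vars :: "'a::comm_ring_1 spoly \<Rightarrow> nat set set" where
  "vars p = \<Union> (Poly_Mapping.keys ` Poly_Mapping.keys p)"

definition RG :: "nat \<Rightarrow> nat set set \<Rightarrow> 'a::comm_ring_1 spoly set" where
  "RG d E = {p. \<forall>S\<in>vars p. stable d E S}"

definition xmon :: "nat set \<Rightarrow> nat \<Rightarrow> (nat \<Rightarrow> nat) \<Rightarrow> 'a::comm_ring_1 spoly" where
  "xmon W k f = (\<Prod>l\<in>{1..k}. var {v\<in>W. f v = l})"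

definition ideal_gen :: "'a::comm_ring_1 set \<Rightarrow> 'a set \<Rightarrow> 'a set" where
  "ideal_gen R B = {(\<Sum>b\<in>F. c b * b) | F c. finite F \<and> F \<subseteq> B \<and> (\<forall>b\<in>F. c b \<in> R)}"

definition J_gens :: "nat \<Rightarrow> nat set set \<Rightarrow> 'a::comm_ring_1 spoly set" where
  "J_gens d E = {xmon W 2 f - xmon W 2 g | W f g.
      W \<subseteq> {1..d} \<and> coloring E W 2 f \<and> coloring E W 2 g}"

definition J :: "nat \<Rightarrow> nat set set \<Rightarrow> 'a::comm_ring_1 spoly set" where
  "J d E = ideal_gen (RG d E) (J_gens d E)"

end

theory Submission
  imports Defs
begin

text \<open>A Kempe switch changes a colouring h only on the union W of two colour classes, and there
  h and the switched colouring h' restrict to 2-colourings of G[W]. Hence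
  x_h - x_h' = x_R (x_{h|W} - x_{h'|W}), where x_R is the product of the other colour classes,
  and this lies in J_G.

  Conversely, let K be the set of monomials x_h of the colourings h that are Kempe equivalent
  to f. If x_h = x_w x_{f1} for a 2-colouring f1 of some G[W], then the two classes of f1 are two
  colour classes of h, and recolouring their union according to another 2-colouring f2 is a
  sequence of Kempe switches; so x_w x_{f1} is in K iff x_w x_{f2} is. Therefore the linear
  functional summing the coefficients of the monomials in K vanishes on J_G. Applied to
  x_f - x_g it yields some h Kempe equivalent to f with the same colour classes as g, and two
  colourings that differ by a permutation of the colours are Kempe equivalent.\<close>

section \<open>Colour classes and their monomials\<close>

definition color_class :: "nat set \<Rightarrow> (nat \<Rightarrow> nat) \<Rightarrow> nat \<Rightarrow> nat set" where
  "color_class V h l = {v\<in>V. h v = l}"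

definition class_monomial :: "nat set \<Rightarrow> nat set \<Rightarrow> (nat \<Rightarrow> nat) \<Rightarrow> (nat set \<Rightarrow>\<^sub>0 nat)" where
  "class_monomial V L h = (\<Sum>l\<in>L. Poly_Mapping.single (color_class V h l) 1)"

lemma prod_single_one:
  "finite L \<Longrightarrow> (\<Prod>l\<in>L. Poly_Mapping.single (a l) (1::'a::comm_semiring_1)) =
    Poly_Mapping.single (\<Sum>l\<in>L. a l) 1"
  by (induction L rule: finite_induct) (auto simp: mult_single)

lemma xmon_eq_single:
  "(xmon W k f :: 'a::comm_ring_1 spoly) = Poly_Mapping.single (class_monomial W {1..k} f) 1"
  unfolding xmon_def var_def class_monomial_def color_class_def by (simp add: prod_single_one)

lemma lookup_class_monomial:
  "finite L \<Longrightarrow> Poly_Mapping.lookup (class_monomial V L h) S = card {l\<in>L. color_class V h l = S}"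
  unfolding class_monomial_def
  by (simp add: lookup_sum lookup_single when_def sum.If_cases Int_def conj_commute)

lemma keys_class_monomial: "Poly_Mapping.keys (class_monomial V L h) \<subseteq> color_class V h ` L"
  unfolding class_monomial_def by (rule order.trans[OF keys_sum]) auto

lemma class_monomial_pair:
  "i \<noteq> j \<Longrightarrow> class_monomial V {i, j} h =
     Poly_Mapping.single (color_class V h i) 1 + Poly_Mapping.single (color_class V h j) 1"
  unfolding class_monomial_def by simp

lemma class_monomial_two:
  "class_monomial W {1..2} f =
     Poly_Mapping.single (color_class W f 1) 1 + Poly_Mapping.single (color_class W f 2) 1"
proof -
  have "{1..2::nat} = {1, 2}" by auto
  then show ?thesis by (simp add: class_monomial_pair)
qed

lemma class_monomial_split_pair:
  assumes "finite L" "i \<in> L" "j \<in> L"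
  shows "class_monomial V L h = class_monomial V (L - {i, j}) h + class_monomial V {i, j} h"
  unfolding class_monomial_def using assms by (intro sum.subset_diff) auto

lemma two_classes_of_class_monomial:
  assumes "finite L"
    and eq: "class_monomial V L h = w + Poly_Mapping.single A 1 + Poly_Mapping.single B 1"
  obtains i j where "i \<in> L" "j \<in> L" "i \<noteq> j" "color_class V h i = A" "color_class V h j = B"
proof -
  let ?colors = "\<lambda>S. {l\<in>L. color_class V h l = S}"
  have card: "card (?colors S) =
      Poly_Mapping.lookup w S + (if A = S then 1 else 0) + (if B = S then 1 else 0)" for S
    using arg_cong[OF eq, of "\<lambda>m. Poly_Mapping.lookup m S"] assms(1)
    by (simp add: lookup_class_monomial lookup_add lookup_single when_def)
  have "card (?colors A) \<noteq> 0" using card[of A] by simp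
  then obtain i where i: "i \<in> ?colors A" by (metis card.empty ex_in_conv)
  obtain j where "j \<in> ?colors B" "j \<noteq> i"
  proof (cases "A = B")
    case True
    then have "card (?colors A) \<ge> 2" using card[of A] by simp
    have "\<not> ?colors A \<subseteq> {i}"
    proof
      assume "?colors A \<subseteq> {i}"
      then have "card (?colors A) \<le> card {i}" by (intro card_mono) simp_all
      then show False using \<open>card (?colors A) \<ge> 2\<close> by simp
    qed
    then obtain j where "j \<in> ?colors A" "j \<noteq> i" by blast
    then show ?thesis using True by (intro that) simp_all
  next
    case False
    have "card (?colors B) \<noteq> 0" using card[of B] by simp
    then obtain j where "j \<in> ?colors B" by (metis card.empty ex_in_conv)
    moreover have "j \<noteq> i" using False i calculation by auto
    ultimately show ?thesis by (intro that)
  qed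
  with i show ?thesis by (intro that[of i j]) auto
qed

section \<open>Colourings\<close>

lemma coloring_range: "coloring E W k f \<Longrightarrow> v \<in> W \<Longrightarrow> f v \<in> {1..k}"
  unfolding coloring_def by blast

lemma coloring_edge: "coloring E W k f \<Longrightarrow> u \<in> W \<Longrightarrow> v \<in> W \<Longrightarrow> {u, v} \<in> E \<Longrightarrow> f u \<noteq> f v"
  unfolding coloring_def by blast

lemma coloring_outside: "coloring E W k f \<Longrightarrow> v \<notin> W \<Longrightarrow> f v = undefined"
  unfolding coloring_def by blast

lemma coloringI:
  assumes "\<And>v. v \<in> W \<Longrightarrow> f v \<in> {1..k}" "\<And>v. v \<notin> W \<Longrightarrow> f v = undefined"
    "\<And>u v. u \<in> W \<Longrightarrow> v \<in> W \<Longrightarrow> {u, v} \<in> E \<Longrightarrow> f u \<noteq> f v"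
  shows "coloring E W k f"
  unfolding coloring_def using assms by blast

lemma coloring_eqI:
  "coloring E W k f \<Longrightarrow> coloring E W k' g \<Longrightarrow> (\<And>v. v \<in> W \<Longrightarrow> f v = g v) \<Longrightarrow> f = g"
  by (metis coloring_outside ext)

definition differ_within :: "nat \<Rightarrow> nat \<Rightarrow> nat set \<Rightarrow> (nat \<Rightarrow> nat) \<Rightarrow> (nat \<Rightarrow> nat) \<Rightarrow> bool" where
  "differ_within i j V h h' \<longleftrightarrow> (\<forall>v\<in>V. h v \<noteq> h' v \<longrightarrow> {h v, h' v} \<subseteq> {i, j})"

lemma class_monomial_other_colors:
  assumes "differ_within i j V h h'"
  shows "class_monomial V (L - {i, j}) h' = class_monomial V (L - {i, j}) h"
  unfolding class_monomial_def
proof (rule sum.cong[OF refl])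
  fix l assume "l \<in> L - {i, j}"
  then have "color_class V h' l = color_class V h l"
    using assms unfolding differ_within_def color_class_def by auto
  then show "Poly_Mapping.single (color_class V h' l) 1 =
      Poly_Mapping.single (color_class V h l) (1::nat)"
    by simp
qed

definition two_coloring :: "nat \<Rightarrow> nat set \<Rightarrow> (nat \<Rightarrow> nat) \<Rightarrow> nat \<Rightarrow> nat" where
  "two_coloring i W h = (\<lambda>v\<in>W. if h v = i then 1 else 2)"

lemma coloring_two_coloring:
  assumes h: "coloring E V k h" and W: "W = {v\<in>V. h v \<in> {i, j}}"
  shows "coloring E W 2 (two_coloring i W h)"
proof (rule coloringI)
  fix u w assume uw: "u \<in> W" "w \<in> W" "{u, w} \<in> E"
  then have "h u \<noteq> h w" "h u \<in> {i, j}" "h w \<in> {i, j}" using coloring_edge[OF h] W by auto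
  then show "two_coloring i W h u \<noteq> two_coloring i W h w"
    using uw unfolding two_coloring_def by auto
qed (auto simp: two_coloring_def)

lemma class_monomial_split_two_coloring:
  assumes L: "finite L" "i \<in> L" "j \<in> L" "i \<noteq> j" and W: "W = {v\<in>V. h v \<in> {i, j}}"
  shows "class_monomial V L h =
    class_monomial V (L - {i, j}) h + class_monomial W {1..2} (two_coloring i W h)"
proof -
  have "color_class W (two_coloring i W h) 1 = color_class V h i"
    "color_class W (two_coloring i W h) 2 = color_class V h j"
    using L(4) unfolding color_class_def two_coloring_def W by auto
  then have "class_monomial W {1..2} (two_coloring i W h) = class_monomial V {i, j} h"
    unfolding class_monomial_two class_monomial_pair[OF L(4)] by simp
  with class_monomial_split_pair[OF L(1-3)] show ?thesis by simp
qed

section \<open>Kempe switches\<close>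

definition switch_on :: "nat set \<Rightarrow> nat \<Rightarrow> nat \<Rightarrow> (nat \<Rightarrow> nat) \<Rightarrow> nat \<Rightarrow> nat" where
  "switch_on C i j h = (\<lambda>v. if v \<in> C then (if h v = i then j else i) else h v)"

lemma self_in_component: "v \<in> component E U v"
  unfolding component_def by simp

lemma component_subset: "v \<in> U \<Longrightarrow> component E U v \<subseteq> U"
  unfolding component_def by (auto elim: rtranclE)

lemma component_edge_closed:
  "a \<in> component E U v \<Longrightarrow> a \<in> U \<Longrightarrow> b \<in> U \<Longrightarrow> {a, b} \<in> E \<Longrightarrow> b \<in> component E U v"
  unfolding component_def by (auto intro: rtrancl_into_rtrancl)

lemma coloring_switch_on_component:
  assumes h: "coloring E V k h" and ij: "i \<in> {1..k}" "j \<in> {1..k}"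
    and U: "U = {u\<in>V. h u = i \<or> h u = j}" and v: "v \<in> U"
  shows "coloring E V k (switch_on (component E U v) i j h)"
proof -
  let ?C = "component E U v"
  have CU: "?C \<subseteq> U" using component_subset[OF v] .
  have edge: "switch_on ?C i j h u \<noteq> switch_on ?C i j h w"
    if uw: "u \<in> V" "w \<in> V" "{u, w} \<in> E" and uC: "u \<in> ?C" for u w
  proof (cases "w \<in> ?C")
    case True
    then show ?thesis using uC CU coloring_edge[OF h uw] unfolding switch_on_def U by auto
  next
    case False
    have "u \<in> U" using CU uC by blast
    then have "w \<notin> U" using component_edge_closed[OF uC _ _ uw(3)] False by blast
    then show ?thesis using uC uw CU unfolding switch_on_def U by auto
  qed
  show ?thesis
  proof (rule coloringI)
    fix u assume "u \<in> V"
    then show "switch_on ?C i j h u \<in> {1..k}"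
      using coloring_range[OF h] ij unfolding switch_on_def by auto
  next
    fix u assume "u \<notin> V"
    then show "switch_on ?C i j h u = undefined"
      using coloring_outside[OF h] CU U unfolding switch_on_def by auto
  next
    fix u w assume uw: "u \<in> V" "w \<in> V" "{u, w} \<in> E"
    then have wu: "{w, u} \<in> E" by (simp add: insert_commute)
    consider "u \<in> ?C" | "w \<in> ?C" | "u \<notin> ?C" "w \<notin> ?C" by blast
    then show "switch_on ?C i j h u \<noteq> switch_on ?C i j h w"
      by cases
        (use edge[OF uw] edge[OF uw(2,1) wu] coloring_edge[OF h uw] in \<open>auto simp: switch_on_def\<close>)
  qed
qed

lemma kempe_switch_component:
  assumes h: "coloring E {1..d} k h" and ij: "i \<in> {1..k}" "j \<in> {1..k}" "i \<noteq> j"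
    and U: "U = {u\<in>{1..d}. h u = i \<or> h u = j}" and v: "v \<in> U"
  shows "kempe_switch d E k h (switch_on (component E U v) i j h)"
proof -
  let ?C = "component E U v"
  have "\<exists>a b. 1 \<le> a \<and> a < b \<and> b \<le> k \<and> U = {u\<in>{1..d}. h u = a \<or> h u = b} \<and>
      switch_on ?C i j h = switch_on ?C a b h"
  proof (cases "i < j")
    case True
    then show ?thesis using ij U by auto
  next
    case False
    have "switch_on ?C i j h = switch_on ?C j i h"
      using component_subset[OF v] ij(3) unfolding switch_on_def U by fastforce
    then show ?thesis using False ij U by (intro exI[of _ j] exI[of _ i]) auto
  qed
  then obtain a b where ab: "1 \<le> a" "a < b" "b \<le> k" "U = {u\<in>{1..d}. h u = a \<or> h u = b}"
    "switch_on ?C i j h = switch_on ?C a b h" by blast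
  have "is_component E U ?C" using v unfolding is_component_def by blast
  then show ?thesis
    unfolding kempe_switch_def using h coloring_switch_on_component[OF h ij(1,2) U v] ab
    by (intro conjI exI[of _ a] exI[of _ b] exI[of _ ?C]) (simp_all add: switch_on_def)
qed

lemma kempe_switch_differ_within:
  assumes "kempe_switch d E k h h'"
  obtains i j where "i \<in> {1..k}" "j \<in> {1..k}" "i \<noteq> j" "differ_within i j {1..d} h h'"
proof -
  obtain i j C where ij: "1 \<le> i" "i < j" "j \<le> k"
    and C: "is_component E {v\<in>{1..d}. h v = i \<or> h v = j} C"
    and h': "h' = (\<lambda>v. if v \<in> C then (if h v = i then j else i) else h v)"
    using assms unfolding kempe_switch_def by auto
  have "C \<subseteq> {v\<in>{1..d}. h v = i \<or> h v = j}"
    using C component_subset unfolding is_component_def by metis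
  then have "differ_within i j {1..d} h h'"
    unfolding differ_within_def h' by auto
  then show ?thesis using ij by (intro that) auto
qed

lemma switch_on_component_eq:
  assumes h: "coloring E V k h" and h': "coloring E V k h'"
    and diff: "differ_within i j V h h'" and "i \<noteq> j"
    and U: "U = {u\<in>V. h u = i \<or> h u = j}" and v: "v \<in> V" "h v \<noteq> h' v"
    and u: "u \<in> component E U v"
  shows "switch_on (component E U v) i j h u = h' u"
proof -
  have hv: "v \<in> U" using diff v unfolding differ_within_def U by auto
  have "u \<in> U" using component_subset[OF hv] u by blast
  then have hu: "h u \<in> {i, j}" "h' u \<in> {i, j}" using diff unfolding differ_within_def U by auto
  \<comment> \<open>Along an edge inside U both colourings alternate between i and j, so disagreement with
    h' propagates from v through its whole component.\<close>
  have "(v, u) \<in> {(a, b). a \<in> U \<and> b \<in> U \<and> {a, b} \<in> E}\<^sup>*"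
    using u unfolding component_def by simp
  then have "h u \<noteq> h' u"
  proof (induction rule: rtrancl_induct)
    case base
    then show ?case using v by simp
  next
    case (step a b)
    then have ab: "a \<in> V" "b \<in> V" "{a, b} \<in> E" "h a \<in> {i, j}" "h b \<in> {i, j}"
      unfolding U by auto
    then have "h' a \<in> {i, j}" "h' b \<in> {i, j}" using diff unfolding differ_within_def by auto
    moreover have "h a \<noteq> h b" "h' a \<noteq> h' b"
      using coloring_edge[OF h] coloring_edge[OF h'] ab by blast+
    ultimately show ?case using step.IH ab by auto
  qed
  then show ?thesis using u hu \<open>i \<noteq> j\<close> unfolding switch_on_def by auto
qed

lemma kempe_equiv_if_differ_within:
  assumes h': "coloring E {1..d} k h'" and ij: "i \<in> {1..k}" "j \<in> {1..k}" "i \<noteq> j"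
  shows "coloring E {1..d} k h \<Longrightarrow> differ_within i j {1..d} h h' \<Longrightarrow> kempe_equiv d E k h h'"
proof (induction "card {v\<in>{1..d}. h v \<noteq> h' v}" arbitrary: h rule: less_induct)
  case less
  note h = less.prems(1) and diff = less.prems(2)
  show ?case
  proof (cases "\<exists>v\<in>{1..d}. h v \<noteq> h' v")
    case False
    then have "h = h'" using coloring_eqI[OF h h'] by blast
    then show ?thesis by (simp add: kempe_equiv_def)
  next
    case True
    then obtain v where v: "v \<in> {1..d}" "h v \<noteq> h' v" by blast
    define U where "U = {u\<in>{1..d}. h u = i \<or> h u = j}"
    define h1 where "h1 = switch_on (component E U v) i j h"
    have "v \<in> U" using diff v unfolding differ_within_def U_def by auto
    then have switch: "kempe_switch d E k h h1"
      unfolding h1_def using kempe_switch_component[OF h ij U_def] by blast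
    then have h1: "coloring E {1..d} k h1" unfolding kempe_switch_def by blast
    have agree: "h1 u = h' u" if "u \<in> component E U v" for u
      unfolding h1_def using switch_on_component_eq[OF h h' diff ij(3) U_def v that] .
    have off: "h1 u = h u" if "u \<notin> component E U v" for u
      using that unfolding h1_def switch_on_def by simp
    have "differ_within i j {1..d} h1 h'"
      using diff agree off unfolding differ_within_def by metis
    moreover have "card {u\<in>{1..d}. h1 u \<noteq> h' u} < card {u\<in>{1..d}. h u \<noteq> h' u}"
    proof (rule psubset_card_mono)
      show "{u\<in>{1..d}. h1 u \<noteq> h' u} \<subset> {u\<in>{1..d}. h u \<noteq> h' u}"
        using agree off v self_in_component[of v E U] by fastforce
    qed simp
    ultimately have "kempe_equiv d E k h1 h'" using less.hyps h1 by blast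
    then show ?thesis
      using switch unfolding kempe_equiv_def by (simp add: converse_rtranclp_into_rtranclp)
  qed
qed

lemma color_class_of_same_class_monomial:
  assumes "finite L" "class_monomial V L h = class_monomial V L g"
    and "b \<in> L" "v \<in> color_class V g b"
  shows "color_class V h (h v) = color_class V g b"
proof -
  let ?S = "color_class V g b"
  have "card {l\<in>L. color_class V h l = ?S} = card {l\<in>L. color_class V g l = ?S}"
    using arg_cong[OF assms(2), of "\<lambda>m. Poly_Mapping.lookup m ?S"] assms(1)
    by (simp add: lookup_class_monomial)
  moreover have "{l\<in>L. color_class V g l = ?S} \<noteq> {}" using assms(3) by blast
  ultimately have "card {l\<in>L. color_class V h l = ?S} \<noteq> 0" using assms(1) by simp
  then have "{l\<in>L. color_class V h l = ?S} \<noteq> {}" by (metis card.empty)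
  then obtain l where l: "color_class V h l = ?S" by blast
  then have "v \<in> color_class V h l" using assms(4) by simp
  then have "h v = l" unfolding color_class_def by simp
  with l show ?thesis by simp
qed

definition swap_colors :: "nat \<Rightarrow> nat \<Rightarrow> nat set \<Rightarrow> (nat \<Rightarrow> nat) \<Rightarrow> nat \<Rightarrow> nat" where
  "swap_colors a b V h = (\<lambda>u\<in>V. if h u = a then b else if h u = b then a else h u)"

lemma coloring_swap_colors:
  assumes h: "coloring E V k h" and "a \<in> {1..k}" "b \<in> {1..k}"
  shows "coloring E V k (swap_colors a b V h)"
proof (rule coloringI)
  fix u w assume uw: "u \<in> V" "w \<in> V" "{u, w} \<in> E"
  then show "swap_colors a b V h u \<noteq> swap_colors a b V h w"
    using coloring_edge[OF h uw] unfolding swap_colors_def by auto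
qed (use coloring_range[OF h] assms(2,3) in \<open>auto simp: swap_colors_def\<close>)

lemma differ_within_swap_colors: "differ_within a b V h (swap_colors a b V h)"
  unfolding differ_within_def swap_colors_def by auto

lemma class_monomial_swap_colors:
  assumes "finite L" "a \<in> L" "b \<in> L" "a \<noteq> b"
  shows "class_monomial V L (swap_colors a b V h) = class_monomial V L h"
proof -
  have "color_class V (swap_colors a b V h) a = color_class V h b"
    "color_class V (swap_colors a b V h) b = color_class V h a"
    using assms(4) unfolding color_class_def swap_colors_def by auto
  then have pair: "class_monomial V {a, b} (swap_colors a b V h) = class_monomial V {a, b} h"
    using assms(4) by (simp add: class_monomial_pair add.commute)
  have "class_monomial V L (swap_colors a b V h) =
      class_monomial V (L - {a, b}) (swap_colors a b V h) +
      class_monomial V {a, b} (swap_colors a b V h)"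
    using assms by (intro class_monomial_split_pair)
  also have "\<dots> = class_monomial V (L - {a, b}) h + class_monomial V {a, b} h"
    unfolding pair class_monomial_other_colors[OF differ_within_swap_colors] ..
  also have "\<dots> = class_monomial V L h"
    using assms by (intro class_monomial_split_pair[symmetric])
  finally show ?thesis .
qed

lemma kempe_equiv_if_same_class_monomial:
  assumes g: "coloring E {1..d} k g"
  shows "coloring E {1..d} k h \<Longrightarrow>
    class_monomial {1..d} {1..k} h = class_monomial {1..d} {1..k} g \<Longrightarrow> kempe_equiv d E k h g"
proof (induction "card {v\<in>{1..d}. h v \<noteq> g v}" arbitrary: h rule: less_induct)
  case less
  note h = less.prems(1) and same = less.prems(2)
  show ?case
  proof (cases "\<exists>v\<in>{1..d}. h v \<noteq> g v")
    case False
    then have "h = g" using coloring_eqI[OF h g] by blast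
    then show ?thesis by (simp add: kempe_equiv_def)
  next
    case True
    then obtain v where v: "v \<in> {1..d}" "h v \<noteq> g v" by blast
    define a where "a = h v"
    define b where "b = g v"
    have ab: "a \<in> {1..k}" "b \<in> {1..k}" "a \<noteq> b"
      using coloring_range[OF h v(1)] coloring_range[OF g v(1)] v(2) unfolding a_def b_def by auto
    have "v \<in> color_class {1..d} g b" using v(1) unfolding color_class_def b_def by simp
    then have "color_class {1..d} h a = color_class {1..d} g b"
      unfolding a_def
      by (rule color_class_of_same_class_monomial[OF finite_atLeastAtMost same ab(2)])
    then have class_ab: "h u = a \<longleftrightarrow> g u = b" if "u \<in> {1..d}" for u
      using that unfolding color_class_def by blast
    define h2 where "h2 = swap_colors a b {1..d} h"
    have h2: "coloring E {1..d} k h2"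
      unfolding h2_def using coloring_swap_colors[OF h ab(1,2)] .
    have "differ_within a b {1..d} h h2"
      unfolding h2_def by (rule differ_within_swap_colors)
    then have switch: "kempe_equiv d E k h h2"
      by (rule kempe_equiv_if_differ_within[OF h2 ab h])
    have "class_monomial {1..d} {1..k} h2 = class_monomial {1..d} {1..k} h"
      unfolding h2_def using ab by (intro class_monomial_swap_colors) auto
    moreover have "card {u\<in>{1..d}. h2 u \<noteq> g u} < card {u\<in>{1..d}. h u \<noteq> g u}"
    proof (rule psubset_card_mono)
      have "{u\<in>{1..d}. h2 u \<noteq> g u} \<subseteq> {u\<in>{1..d}. h u \<noteq> g u} - {v}"
        using class_ab unfolding h2_def swap_colors_def a_def b_def by auto
      then show "{u\<in>{1..d}. h2 u \<noteq> g u} \<subset> {u\<in>{1..d}. h u \<noteq> g u}" using v by blast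
    qed simp
    ultimately have "kempe_equiv d E k h2 g" using less.hyps h2 same by simp
    then show ?thesis using switch unfolding kempe_equiv_def by simp
  qed
qed

definition recolor_two :: "nat \<Rightarrow> nat \<Rightarrow> nat set \<Rightarrow> (nat \<Rightarrow> nat) \<Rightarrow> (nat \<Rightarrow> nat) \<Rightarrow> nat \<Rightarrow> nat" where
  "recolor_two i j W f h = (\<lambda>v. if v \<in> W then (if f v = 1 then i else j) else h v)"

lemma coloring_recolor_two:
  assumes h: "coloring E V k h" and f: "coloring E W 2 f"
    and ij: "i \<in> {1..k}" "j \<in> {1..k}" "i \<noteq> j" and W: "W = {v\<in>V. h v \<in> {i, j}}"
  shows "coloring E V k (recolor_two i j W f h)"
proof (rule coloringI)
  fix u v assume uv: "u \<in> V" "v \<in> V" "{u, v} \<in> E"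
  have f_range: "f x = 1 \<or> f x = 2" if "x \<in> W" for x
    using coloring_range[OF f that] by auto
  consider "u \<in> W" "v \<in> W" | "(u \<in> W) \<noteq> (v \<in> W)" | "u \<notin> W" "v \<notin> W" by blast
  then show "recolor_two i j W f h u \<noteq> recolor_two i j W f h v"
  proof cases
    case 1
    then show ?thesis
      using coloring_edge[OF f 1 uv(3)] f_range[OF 1(1)] f_range[OF 1(2)] ij(3)
      unfolding recolor_two_def by auto
  next
    case 2
    then show ?thesis using uv W unfolding recolor_two_def by auto
  next
    case 3
    then show ?thesis using coloring_edge[OF h uv] unfolding recolor_two_def by simp
  qed
qed (use coloring_range[OF h] coloring_outside[OF h] ij W in \<open>auto simp: recolor_two_def\<close>)

lemma kempe_exchange_two_coloring:
  assumes h: "coloring E {1..d} k h" and f1: "coloring E W 2 f1" and f2: "coloring E W 2 f2"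
    and eq: "class_monomial {1..d} {1..k} h = w + class_monomial W {1..2} f1"
  obtains h' where "coloring E {1..d} k h'" "kempe_equiv d E k h h'"
    "class_monomial {1..d} {1..k} h' = w + class_monomial W {1..2} f2"
proof -
  obtain i j where ij: "i \<in> {1..k}" "j \<in> {1..k}" "i \<noteq> j"
    and cls: "color_class {1..d} h i = color_class W f1 1"
      "color_class {1..d} h j = color_class W f1 2"
    using two_classes_of_class_monomial[OF finite_atLeastAtMost
        eq[unfolded class_monomial_two add.assoc[symmetric]]]
    by blast
  have f_range: "f v = 1 \<or> f v = 2" if "coloring E W 2 f" "v \<in> W" for f v
    using coloring_range[OF that] by auto
  have W: "W = {v\<in>{1..d}. h v \<in> {i, j}}"
    using cls f_range[OF f1] unfolding color_class_def by blast
  have "class_monomial {1..d} {i, j} h = class_monomial W {1..2} f1"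
    unfolding class_monomial_two class_monomial_pair[OF ij(3)] cls ..
  then have rest: "w = class_monomial {1..d} ({1..k} - {i, j}) h"
    using eq class_monomial_split_pair[of "{1..k}" i j "{1..d}" h] ij by simp
  define h' where "h' = recolor_two i j W f2 h"
  have h': "coloring E {1..d} k h'"
    unfolding h'_def using coloring_recolor_two[OF h f2 ij W] .
  have diff: "differ_within i j {1..d} h h'"
    using W unfolding differ_within_def h'_def recolor_two_def by auto
  have "color_class {1..d} h' i = color_class W f2 1" "color_class {1..d} h' j = color_class W f2 2"
    using W f_range[OF f2] ij(3) unfolding color_class_def h'_def recolor_two_def by auto
  then have "class_monomial {1..d} {i, j} h' = class_monomial W {1..2} f2"
    unfolding class_monomial_two class_monomial_pair[OF ij(3)] by simp
  then have "class_monomial {1..d} {1..k} h' = w + class_monomial W {1..2} f2"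
    using class_monomial_split_pair[of "{1..k}" i j "{1..d}" h'] ij
    unfolding rest class_monomial_other_colors[OF diff] by simp
  then show ?thesis
    using h' kempe_equiv_if_differ_within[OF h' ij h diff] by (intro that)
qed

section \<open>The ideal J_G\<close>

lemma ideal_gen_add:
  assumes R: "0 \<in> R" "\<And>x y. x \<in> R \<Longrightarrow> y \<in> R \<Longrightarrow> x + y \<in> R"
    and "p \<in> ideal_gen R B" "q \<in> ideal_gen R B"
  shows "p + q \<in> ideal_gen R B"
proof -
  obtain F1 c1 where F1: "p = (\<Sum>b\<in>F1. c1 b * b)" "finite F1" "F1 \<subseteq> B" "\<forall>b\<in>F1. c1 b \<in> R"
    using assms(3) unfolding ideal_gen_def by blast
  obtain F2 c2 where F2: "q = (\<Sum>b\<in>F2. c2 b * b)" "finite F2" "F2 \<subseteq> B" "\<forall>b\<in>F2. c2 b \<in> R"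
    using assms(4) unfolding ideal_gen_def by blast
  define c where "c b = (if b \<in> F1 then c1 b else 0) + (if b \<in> F2 then c2 b else 0)" for b
  have extend: "(\<Sum>b\<in>F1 \<union> F2. (if b \<in> F then c' b else 0) * b) = (\<Sum>b\<in>F. c' b * b)"
    if "F \<subseteq> F1 \<union> F2" for F c'
    using F1(2) F2(2) that by (intro sum.mono_neutral_cong_right) auto
  have "p + q = (\<Sum>b\<in>F1 \<union> F2. c b * b)"
    using extend[of F1 c1] extend[of F2 c2] F1(1) F2(1)
    by (simp add: c_def distrib_right sum.distrib)
  moreover have "\<forall>b\<in>F1 \<union> F2. c b \<in> R" using F1(4) F2(4) R unfolding c_def by auto
  ultimately show ?thesis using F1(2,3) F2(2,3) unfolding ideal_gen_def by blast
qed

lemma ideal_gen_mult_generator: "b \<in> B \<Longrightarrow> c \<in> R \<Longrightarrow> c * b \<in> ideal_gen R B"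
  unfolding ideal_gen_def by (intro CollectI exI[of _ "{b}"] exI[of _ "\<lambda>_. c"]) simp

lemma zero_in_RG: "0 \<in> RG d E"
  unfolding RG_def vars_def by simp

lemma add_in_RG: "p \<in> RG d E \<Longrightarrow> q \<in> RG d E \<Longrightarrow> p + q \<in> RG d E"
  unfolding RG_def vars_def using keys_add[of p q] by blast

lemma zero_in_J: "0 \<in> J d E"
  unfolding J_def ideal_gen_def by (intro CollectI exI[of _ "{}"]) simp

lemma add_in_J: "p \<in> J d E \<Longrightarrow> q \<in> J d E \<Longrightarrow> p + q \<in> J d E"
  unfolding J_def by (rule ideal_gen_add[OF zero_in_RG add_in_RG])

lemma stable_color_class:
  assumes "simple_graph d E" "coloring E {1..d} k h"
  shows "stable d E (color_class {1..d} h l)"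
  unfolding stable_def
proof (intro conjI ballI)
  show "color_class {1..d} h l \<subseteq> {1..d}" unfolding color_class_def by blast
next
  fix e assume "e \<in> E"
  then obtain u v where e: "e = {u, v}" "u \<in> {1..d}" "v \<in> {1..d}"
    using assms(1) unfolding simple_graph_def by blast
  then have "h u \<noteq> h v" using coloring_edge[OF assms(2)] \<open>e \<in> E\<close> by blast
  then show "\<not> e \<subseteq> color_class {1..d} h l" unfolding e color_class_def by auto
qed

lemma single_class_monomial_in_RG:
  assumes "simple_graph d E" "coloring E {1..d} k h"
  shows "Poly_Mapping.single (class_monomial {1..d} L h) 1 \<in> RG d E"
  unfolding RG_def vars_def using keys_class_monomial stable_color_class[OF assms] by fastforce

lemma xmon_diff_in_J_if_differ_within:
  assumes G: "simple_graph d E" and h: "coloring E {1..d} k h" and h': "coloring E {1..d} k h'"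
    and ij: "i \<in> {1..k}" "j \<in> {1..k}" "i \<noteq> j" and diff: "differ_within i j {1..d} h h'"
  shows "(xmon {1..d} k h - xmon {1..d} k h' :: 'a::comm_ring_1 spoly) \<in> J d E"
proof -
  define W where "W = {v\<in>{1..d}. h v \<in> {i, j}}"
  have "h' v \<in> {i, j} \<longleftrightarrow> h v \<in> {i, j}" if "v \<in> {1..d}" for v
  proof -
    have "h v \<noteq> h' v \<longrightarrow> {h v, h' v} \<subseteq> {i, j}"
      using diff that unfolding differ_within_def by blast
    then show ?thesis by auto
  qed
  then have W': "W = {v\<in>{1..d}. h' v \<in> {i, j}}" unfolding W_def by auto
  define f1 where "f1 = two_coloring i W h"
  define f2 where "f2 = two_coloring i W h'"
  define R where "R = class_monomial {1..d} ({1..k} - {i, j}) h"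
  have R': "class_monomial {1..d} ({1..k} - {i, j}) h' = R"
    unfolding R_def by (rule class_monomial_other_colors[OF diff])
  have "(xmon {1..d} k h :: 'a spoly) = Poly_Mapping.single R 1 * xmon W 2 f1"
    unfolding xmon_eq_single mult_single R_def f1_def
    using class_monomial_split_two_coloring[OF finite_atLeastAtMost ij W_def] by simp
  moreover have "(xmon {1..d} k h' :: 'a spoly) = Poly_Mapping.single R 1 * xmon W 2 f2"
    unfolding xmon_eq_single mult_single R'[symmetric] f2_def
    using class_monomial_split_two_coloring[OF finite_atLeastAtMost ij W'] by simp
  ultimately have eq: "(xmon {1..d} k h - xmon {1..d} k h' :: 'a spoly) =
      Poly_Mapping.single R 1 * (xmon W 2 f1 - xmon W 2 f2)"
    by (simp add: right_diff_distrib)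
  have "W \<subseteq> {1..d}" "coloring E W 2 f1" "coloring E W 2 f2"
    unfolding f1_def f2_def
    using coloring_two_coloring[OF h W_def] coloring_two_coloring[OF h' W'] by (auto simp: W_def)
  then have "(xmon W 2 f1 - xmon W 2 f2 :: 'a spoly) \<in> J_gens d E"
    unfolding J_gens_def by blast
  moreover have "(Poly_Mapping.single R 1 :: 'a spoly) \<in> RG d E"
    unfolding R_def by (rule single_class_monomial_in_RG[OF G h])
  ultimately show ?thesis unfolding eq J_def by (rule ideal_gen_mult_generator)
qed

lemma xmon_diff_in_J_if_kempe_equiv:
  assumes G: "simple_graph d E" and "kempe_equiv d E k f g"
  shows "(xmon {1..d} k f - xmon {1..d} k g :: 'a::comm_ring_1 spoly) \<in> J d E"
  using assms(2) unfolding kempe_equiv_def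
proof (induction rule: rtranclp_induct)
  case base
  then show ?case using zero_in_J by simp
next
  case (step h h')
  obtain i j where "i \<in> {1..k}" "j \<in> {1..k}" "i \<noteq> j" "differ_within i j {1..d} h h'"
    using kempe_switch_differ_within[OF step.hyps(2)] .
  moreover have "coloring E {1..d} k h" "coloring E {1..d} k h'"
    using step.hyps(2) unfolding kempe_switch_def by blast+
  ultimately have "(xmon {1..d} k h - xmon {1..d} k h' :: 'a spoly) \<in> J d E"
    using xmon_diff_in_J_if_differ_within[OF G] by blast
  from add_in_J[OF step.IH this] show ?case by simp
qed

section \<open>Coefficient sums over a set of monomials\<close>

definition coeff_sum :: "'m set \<Rightarrow> ('m \<Rightarrow>\<^sub>0 'a::comm_monoid_add) \<Rightarrow> 'a" where
  "coeff_sum K p = (\<Sum>m\<in>Poly_Mapping.keys p \<inter> K. Poly_Mapping.lookup p m)"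

lemma coeff_sum_superset:
  assumes "finite S" "Poly_Mapping.keys p \<subseteq> S"
  shows "coeff_sum K p = (\<Sum>m\<in>S \<inter> K. Poly_Mapping.lookup p m)"
  unfolding coeff_sum_def using assms by (intro sum.mono_neutral_left) (auto simp: in_keys_iff)

lemma coeff_sum_add: "coeff_sum K (p + q) = coeff_sum K p + coeff_sum K q"
proof -
  let ?S = "Poly_Mapping.keys p \<union> Poly_Mapping.keys q"
  have "finite ?S" by simp
  then show ?thesis using keys_add[of p q]
    by (simp add: coeff_sum_superset[of ?S] lookup_add sum.distrib)
qed

lemma coeff_sum_diff:
  "coeff_sum K (p - q) = coeff_sum K p - coeff_sum K (q :: 'm \<Rightarrow>\<^sub>0 'a::ab_group_add)"
  using coeff_sum_add[of K "p - q" q] by (simp add: eq_diff_eq)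

lemma coeff_sum_zero [simp]: "coeff_sum K 0 = 0"
  unfolding coeff_sum_def by simp

lemma coeff_sum_sum: "coeff_sum K (\<Sum>b\<in>F. P b) = (\<Sum>b\<in>F. coeff_sum K (P b))"
  by (induction F rule: infinite_finite_induct) (simp_all add: coeff_sum_add)

lemma coeff_sum_single: "coeff_sum K (Poly_Mapping.single m a) = (if m \<in> K then a else 0)"
  unfolding coeff_sum_def by (cases "a = 0") auto

lemma poly_mapping_sum_single:
  "p = (\<Sum>w\<in>Poly_Mapping.keys p. Poly_Mapping.single w (Poly_Mapping.lookup p w))"
  by (rule poly_mapping_eqI)
     (auto simp: lookup_sum lookup_single when_def in_keys_iff sum.delta' split: if_splits)

lemma coeff_sum_mult_single:
  fixes c :: "'m::comm_monoid_add \<Rightarrow>\<^sub>0 'a::comm_semiring_1"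
  shows "coeff_sum K (c * Poly_Mapping.single m 1) = coeff_sum {w. w + m \<in> K} c"
proof -
  have "c * Poly_Mapping.single m 1 =
      (\<Sum>w\<in>Poly_Mapping.keys c. Poly_Mapping.single (w + m) (Poly_Mapping.lookup c w))"
    by (subst poly_mapping_sum_single[of c]) (simp add: sum_distrib_right mult_single)
  then have "coeff_sum K (c * Poly_Mapping.single m 1) =
      (\<Sum>w\<in>Poly_Mapping.keys c. if w + m \<in> K then Poly_Mapping.lookup c w else 0)"
    by (simp add: coeff_sum_sum coeff_sum_single)
  also have "\<dots> = coeff_sum {w. w + m \<in> K} c"
    unfolding coeff_sum_def Int_def by (simp add: sum.inter_filter)
  finally show ?thesis .
qed

lemma coeff_sum_mult_binomial:
  fixes c :: "'m::comm_monoid_add \<Rightarrow>\<^sub>0 'a::comm_ring_1"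
  assumes "\<And>w. w + m1 \<in> K \<longleftrightarrow> w + m2 \<in> K"
  shows "coeff_sum K (c * (Poly_Mapping.single m1 1 - Poly_Mapping.single m2 1)) = 0"
  using assms by (simp add: right_diff_distrib coeff_sum_diff coeff_sum_mult_single)

lemma coeff_sum_J_eq_0:
  assumes closed: "\<And>w W f1 f2. coloring E W 2 f1 \<Longrightarrow> coloring E W 2 f2 \<Longrightarrow>
      w + class_monomial W {1..2} f1 \<in> K \<Longrightarrow> w + class_monomial W {1..2} f2 \<in> K"
    and p: "(p :: 'a::comm_ring_1 spoly) \<in> J d E"
  shows "coeff_sum K p = 0"
proof -
  obtain F c where F: "p = (\<Sum>b\<in>F. c b * b)" "F \<subseteq> J_gens d E"
    using p unfolding J_def ideal_gen_def by blast
  have "coeff_sum K (c b * b) = 0" if bF: "b \<in> F" for b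
  proof -
    obtain W f1 f2 where b: "b = xmon W 2 f1 - xmon W 2 f2" "coloring E W 2 f1" "coloring E W 2 f2"
      using F(2) bF unfolding J_gens_def by blast
    have "w + class_monomial W {1..2} f1 \<in> K \<longleftrightarrow> w + class_monomial W {1..2} f2 \<in> K" for w
      using closed[OF b(2,3)] closed[OF b(3,2)] by blast
    then show ?thesis unfolding b(1) xmon_eq_single by (rule coeff_sum_mult_binomial)
  qed
  then show ?thesis unfolding F(1) coeff_sum_sum by simp
qed

lemma kempe_equiv_if_xmon_diff_in_J:
  assumes f: "coloring E {1..d} k f" and g: "coloring E {1..d} k g"
    and J: "(xmon {1..d} k f - xmon {1..d} k g :: 'a::comm_ring_1 spoly) \<in> J d E"
  shows "kempe_equiv d E k f g"
proof -
  define K where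
    "K = {class_monomial {1..d} {1..k} h | h. coloring E {1..d} k h \<and> kempe_equiv d E k f h}"
  have "w + class_monomial W {1..2} f2 \<in> K"
    if f12: "coloring E W 2 f1" "coloring E W 2 f2" and "w + class_monomial W {1..2} f1 \<in> K"
    for w W f1 f2
  proof -
    obtain h where h: "coloring E {1..d} k h" "kempe_equiv d E k f h"
      "class_monomial {1..d} {1..k} h = w + class_monomial W {1..2} f1"
      using \<open>w + class_monomial W {1..2} f1 \<in> K\<close> unfolding K_def by auto
    obtain h' where h': "coloring E {1..d} k h'" "kempe_equiv d E k h h'"
      "class_monomial {1..d} {1..k} h' = w + class_monomial W {1..2} f2"
      using kempe_exchange_two_coloring[OF h(1) f12 h(3)] .
    have "kempe_equiv d E k f h'" using h(2) h'(2) unfolding kempe_equiv_def by simp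
    with h'(1,3) show ?thesis unfolding K_def by (intro CollectI exI[of _ h']) simp
  qed
  then have "coeff_sum K (xmon {1..d} k f - xmon {1..d} k g :: 'a spoly) = 0"
    using coeff_sum_J_eq_0[OF _ J] by blast
  moreover have "class_monomial {1..d} {1..k} f \<in> K"
    unfolding K_def kempe_equiv_def using f by (intro CollectI exI[of _ f]) simp
  ultimately have "class_monomial {1..d} {1..k} g \<in> K"
    by (simp add: xmon_eq_single coeff_sum_diff coeff_sum_single split: if_splits)
  then obtain h where h: "coloring E {1..d} k h" "kempe_equiv d E k f h"
    "class_monomial {1..d} {1..k} h = class_monomial {1..d} {1..k} g"
    unfolding K_def by auto
  then show ?thesis
    using kempe_equiv_if_same_class_monomial[OF g h(1,3)] unfolding kempe_equiv_def by simp
qed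

theorem theorem1p1:
  fixes d k :: nat and E :: "nat set set" and f g :: "nat \<Rightarrow> nat"
  assumes "simple_graph d E" and "k \<ge> 1"
    and "coloring E {1..d} k f" and "coloring E {1..d} k g"
  shows "kempe_equiv d E k f g \<longleftrightarrow>
         (xmon {1..d} k f - xmon {1..d} k g :: 'a::field spoly) \<in> J d E"
  using xmon_diff_in_J_if_kempe_equiv[OF assms(1)] kempe_equiv_if_xmon_diff_in_J[OF assms(3,4)]
  by blast

end
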